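(* Let $G\neq0$ be a symmetric finite positive measure on $\mathbb{R}$ whose restriction to $(0,+\infty)$ has a density that is real-analytic and strictly positive on $(0,+\infty)$, and let $\mu$ be the $\boxplus_\lambda$-infinitely divisible measure with Lévy measure $G$. Then the restriction of $C_\mu$ to $\mathbb{C}^+$ extends analytically to a neighbourhood of every point $x\in(0,+\infty)$, and the extension satisfies $\operatorname{Im}C_\mu(x)>0$ for all $x\in(0,+\infty)$.
   Context: Fix $\lambda\in(0,1)$. For a symmetric probability measure $\mu$, $C_\mu$ is its rectangular $R$-transform with ratio $\lambda$. A symmetric probability measure $\mu$ is $\boxplus_\lambda$-infinitely divisible with Lévy measure $G$ (a symmetric finite positive measure, uniquely determined) iff $C_\mu$ extends to $\mathbb{C}\setminus[0,\infty)$ and $C_\mu(z)=z\int_{\mathbb{R}}\frac{1+t^2}{1-zt^2}dG(t)$ for all $z\in\mathbb{C}\setminus[0,\infty)$; every such $G$ arises from some $\mu$. *)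

theory Defs
  imports "HOL-Analysis.Analysis"
begin

definition real_analytic_on :: "(real \<Rightarrow> real) \<Rightarrow> real set \<Rightarrow> bool" where
  "real_analytic_on g S \<longleftrightarrow>
     (\<forall>x\<in>S. \<exists>r>0. \<exists>a::nat \<Rightarrow> real. \<forall>y. \<bar>y - x\<bar> < r \<longrightarrow> (\<lambda>n. a n * (y - x) ^ n) sums g y)"

definition symmetric_finite_measure :: "real measure \<Rightarrow> bool" where
  "symmetric_finite_measure G \<longleftrightarrow>
     sets G = sets borel \<and> finite_measure G \<and>
     (\<forall>A\<in>sets borel. emeasure G (uminus ` A) = emeasure G A)"

definition levy_R :: "real measure \<Rightarrow> complex \<Rightarrow> complex" where
  "levy_R G z = z * integral\<^sup>L G (\<lambda>t. (1 + complex_of_real (t\<^sup>2)) / (1 - z * complex_of_real (t\<^sup>2)))"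

definition slit_plane :: "complex set" where
  "slit_plane = {z. \<not> (Im z = 0 \<and> Re z \<ge> 0)}"

end

theory Submission
  imports Defs "HOL-Complex_Analysis.Complex_Analysis"
begin

text \<open>
  For \<open>Im z > 0\<close>, \<open>C(z) = z \<integral> (1 + t\<^sup>2)/(1 - z t\<^sup>2) dG(t)\<close>.  Fix \<open>x > 0\<close>; at \<open>z = x\<close> the kernel
  is singular at \<open>t = \<plusminus>t\<^sub>0\<close>, \<open>t\<^sub>0 = 1/\<surd>x\<close>.  Cut out windows \<open>\<plusminus>[a, b]\<close> around \<open>\<plusminus>t\<^sub>0\<close>:
  \<^item> the far part of the integral is holomorphic near \<open>x\<close> (uniform kernel estimates plus a general
    criterion for holomorphic parameter integrals);
  \<^item> by symmetry of \<open>G\<close> and the density \<open>g\<close>, the windows contribute \<open>2 \<integral>\<^sub>a\<^sup>b g(t) (1 + t\<^sup>2)/(1 - z t\<^sup>2) dt\<close>;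
    with \<open>w = 1/\<surd>z\<close> (below the real axis) and \<open>p(t) = (1 + t\<^sup>2) g(t)\<close> this is, by partial fractions,
    \<open>\<integral>\<^sub>a\<^sup>b p(t)/(w - t) + p(t)/(w + t) dt / (z w)\<close>;
  \<^item> \<open>p\<close> extends holomorphically near \<open>t\<^sub>0\<close> since \<open>g\<close> is real-analytic, and the Cauchy-type integral
    \<open>\<integral>\<^sub>a\<^sup>b p(t)/(w - t) dt\<close> continues across \<open>(a, b)\<close> as a regular part plus \<open>p(w)\<close> times explicit
    logarithms; at \<open>w = t\<^sub>0\<close> the logarithms contribute exactly \<open>i \<pi> p(t\<^sub>0)\<close>, all else is real.
  The sum of both parts is the continuation \<open>levy_local\<close>, and \<open>Im levy_local x = \<surd>x \<pi> p(t\<^sub>0) > 0\<close>.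
\<close>

lemma real_analytic_holomorphic_extension:
  assumes "real_analytic_on g S" and "t0 \<in> S"
  obtains \<rho> h where "\<rho> > 0" "h holomorphic_on ball (complex_of_real t0) \<rho>"
    "\<And>t. \<bar>t - t0\<bar> < \<rho> \<Longrightarrow> h (complex_of_real t) = complex_of_real (g t)"
proof -
  obtain \<rho> c where \<rho>: "\<rho> > 0"
    and sums: "\<And>y. \<bar>y - t0\<bar> < \<rho> \<Longrightarrow> (\<lambda>n. c n * (y - t0) ^ n) sums g y"
    using assms unfolding real_analytic_on_def by blast
  define h where "h w = (\<Sum>n. complex_of_real (c n) * (w - complex_of_real t0) ^ n)" for w
  have "(\<lambda>n. complex_of_real (c n) * (w - complex_of_real t0) ^ n) sums h w"
    if w: "w \<in> ball (complex_of_real t0) \<rho>" for w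
  proof -
    define s where "s = (norm (w - complex_of_real t0) + \<rho>) / 2"
    have s: "norm (w - complex_of_real t0) < s" "s < \<rho>"
      using w by (auto simp: s_def dist_norm norm_minus_commute)
    have "\<bar>(t0 + s) - t0\<bar> < \<rho>" using s norm_ge_zero[of "w - complex_of_real t0"] by linarith
    from sums_summable[OF sums[OF this]] have "summable (\<lambda>n. c n * s ^ n)" by (simp only: add_diff_cancel_left')
    hence "summable (\<lambda>n. complex_of_real (c n) * complex_of_real s ^ n)"
      unfolding of_real_power[symmetric] of_real_mult[symmetric] summable_complex_of_real .
    from powser_insidea[OF this] s have "summable (\<lambda>n. norm (complex_of_real (c n) * (w - complex_of_real t0) ^ n))"
      by simp
    thus ?thesis unfolding h_def by (rule summable_sums[OF summable_norm_cancel])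
  qed
  hence "h holomorphic_on ball (complex_of_real t0) \<rho>"
    by (rule power_series_holomorphic)
  moreover have "h (complex_of_real t) = complex_of_real (g t)" if "\<bar>t - t0\<bar> < \<rho>" for t
  proof -
    have "(\<lambda>n. complex_of_real (c n * (t - t0) ^ n)) sums complex_of_real (g t)"
      using sums[OF that] by (rule sums_of_real)
    thus ?thesis by (simp add: h_def sums_iff)
  qed
  ultimately show ?thesis using that \<rho> by blast
qed

lemma finite_measure_bounded_integral:
  fixes f :: "'a \<Rightarrow> complex"
  assumes "finite_measure M" and "f \<in> borel_measurable M" and "\<And>t. norm (f t) \<le> B"
  shows "integrable M f" "norm (integral\<^sup>L M f) \<le> B * measure M (space M)"
proof -
  interpret finite_measure M by (rule assms(1))
  show int: "integrable M f"
    by (rule integrable_const_bound[where B=B]) (use assms in auto)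
  have "norm (integral\<^sup>L M f) \<le> integral\<^sup>L M (\<lambda>t. norm (f t))"
    by (rule integral_norm_bound)
  also have "\<dots> \<le> integral\<^sup>L M (\<lambda>_. B)"
    by (rule integral_mono) (use int assms in auto)
  finally show "norm (integral\<^sup>L M f) \<le> B * measure M (space M)" by (simp add: mult.commute)
qed

lemma quadratic_remainder_imp_deriv:
  fixes P :: "complex \<Rightarrow> complex"
  assumes U: "open U" "z0 \<in> U"
    and err: "\<And>z. z \<in> U \<Longrightarrow> norm (P z - P z0 - (z - z0) * D) \<le> K * norm (z - z0) ^ 2"
  shows "(P has_field_derivative D) (at z0)"
proof -
  have "((\<lambda>z. (P z - P z0) / (z - z0) - D) \<longlongrightarrow> 0) (at z0)"
  proof (rule Lim_null_comparison)
    show "\<forall>\<^sub>F z in at z0. norm ((P z - P z0) / (z - z0) - D) \<le> K * norm (z - z0)"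
      using eventually_at_in_open[OF U]
    proof eventually_elim
      case (elim z)
      hence "z \<in> U" "z \<noteq> z0" by auto
      have "norm ((P z - P z0) / (z - z0) - D) = norm (P z - P z0 - (z - z0) * D) / norm (z - z0)"
        using \<open>z \<noteq> z0\<close> by (simp add: field_simps norm_divide)
      also have "\<dots> \<le> K * norm (z - z0) ^ 2 / norm (z - z0)"
        by (rule divide_right_mono) (use err[OF \<open>z \<in> U\<close>] in auto)
      finally show ?case using \<open>z \<noteq> z0\<close> by (simp add: power2_eq_square)
    qed
    show "((\<lambda>z. K * norm (z - z0)) \<longlongrightarrow> 0) (at z0)"
      by (auto intro!: tendsto_eq_intros)
  qed
  thus ?thesis unfolding has_field_derivative_iff LIM_zero_iff .
qed

lemma integral_holomorphic_quadratic:
  fixes f d :: "complex \<Rightarrow> 'a \<Rightarrow> complex"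
  assumes M: "finite_measure M" and U: "open U"
    and meas: "\<And>z. f z \<in> borel_measurable M" "\<And>z. d z \<in> borel_measurable M"
    and bound: "\<And>z t. z \<in> U \<Longrightarrow> norm (f z t) \<le> B" "\<And>z t. z \<in> U \<Longrightarrow> norm (d z t) \<le> B"
    and taylor: "\<And>z z0 t. z \<in> U \<Longrightarrow> z0 \<in> U \<Longrightarrow>
                   norm (f z t - f z0 t - (z - z0) * d z0 t) \<le> K * norm (z - z0) ^ 2"
  shows "(\<lambda>z. integral\<^sup>L M (f z)) holomorphic_on U"
proof -
  define P where "P z = integral\<^sup>L M (f z)" for z
  define m where "m = measure M (space M)"
  have fint: "integrable M (f z)" if "z \<in> U" for z
    using finite_measure_bounded_integral(1)[OF M meas(1) bound(1)[OF that]] .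
  have dint: "integrable M (d z)" if "z \<in> U" for z
    using finite_measure_bounded_integral(1)[OF M meas(2) bound(2)[OF that]] .
  have err: "norm (P z - P z0 - (z - z0) * integral\<^sup>L M (d z0)) \<le> K * m * norm (z - z0) ^ 2"
    if z: "z \<in> U" and z0: "z0 \<in> U" for z z0
  proof -
    have "P z - P z0 - (z - z0) * integral\<^sup>L M (d z0)
          = integral\<^sup>L M (\<lambda>t. f z t - f z0 t - (z - z0) * d z0 t)"
      unfolding P_def using fint[OF z] fint[OF z0] dint[OF z0] by simp
    also have "norm \<dots> \<le> K * norm (z - z0) ^ 2 * m"
      unfolding m_def
      by (rule finite_measure_bounded_integral(2)[OF M _ taylor[OF z z0]]) (use meas in measurable)
    finally show ?thesis by (simp add: algebra_simps)
  qed
  have "(P has_field_derivative integral\<^sup>L M (d z0)) (at z0)" if z0: "z0 \<in> U" for z0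
    by (rule quadratic_remainder_imp_deriv[OF U z0 err[OF _ z0]])
  thus ?thesis
    unfolding P_def holomorphic_on_def
    using field_differentiable_at_within field_differentiable_def by blast
qed


lemma symmetric_measure_integral_reflect:
  fixes f :: "real \<Rightarrow> complex"
  assumes symG: "symmetric_finite_measure G" and f: "f \<in> borel_measurable borel"
  shows "integral\<^sup>L G (\<lambda>t. f (- t)) = integral\<^sup>L G f"
proof -
  have sG: "sets G = sets borel" using symG by (simp add: symmetric_finite_measure_def)
  have spG: "space G = UNIV" using sets_eq_imp_space_eq[OF sG] by simp
  have m: "(uminus :: real \<Rightarrow> real) \<in> measurable G borel"
    by (subst measurable_cong_sets[OF sG refl]) simp
  have "distr G borel uminus = G"
  proof (rule measure_eqI)
    fix A assume "A \<in> sets (distr G borel uminus)"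
    hence A: "A \<in> sets borel" by simp
    have "uminus -` A \<inter> space G = uminus ` A"
      by (auto simp: spG image_iff) (metis minus_minus)
    hence "emeasure (distr G borel uminus) A = emeasure G (uminus ` A)"
      using emeasure_distr[OF m A] by simp
    also have "\<dots> = emeasure G A" using symG A by (simp add: symmetric_finite_measure_def)
    finally show "emeasure (distr G borel uminus) A = emeasure G A" .
  qed (use sG in simp)
  hence "integral\<^sup>L G f = integral\<^sup>L (distr G borel uminus) f" by simp
  also have "\<dots> = integral\<^sup>L G (\<lambda>t. f (- t))" by (rule integral_distr[OF m f])
  finally show ?thesis by simp
qed

lemma density_restriction_interval:
  fixes g :: "real \<Rightarrow> real"
  assumes sG: "sets G = sets borel"
    and dens: "\<forall>A\<in>sets borel. emeasure G (A \<inter> {0<..}) =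
                 (\<integral>\<^sup>+ x. indicator (A \<inter> {0<..}) x * ennreal (g x) \<partial>lborel)"
    and a: "0 < a" and gm: "(\<lambda>t. indicator {a..b} t * g t) \<in> borel_measurable borel"
  shows "density G (\<lambda>t. ennreal (indicator {a..b} t))
         = density lborel (\<lambda>t. ennreal (indicator {a..b} t * g t))"
proof (rule measure_eqI)
  let ?S = "{a..b}"
  fix A assume "A \<in> sets (density G (\<lambda>t. ennreal (indicator ?S t)))"
  hence A: "A \<in> sets borel" using sG by simp
  have im: "(\<lambda>t. indicator ?S t :: real) \<in> borel_measurable G"
    by (subst measurable_cong_sets[OF sG refl]) simp
  have "emeasure (density G (\<lambda>t. ennreal (indicator ?S t))) A
        = (\<integral>\<^sup>+ t. ennreal (indicator ?S t) * indicator A t \<partial>G)"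
    by (rule emeasure_density) (use im A sG in auto)
  also have "\<dots> = (\<integral>\<^sup>+ t. indicator (?S \<inter> A) t \<partial>G)"
    by (intro nn_integral_cong) (auto split: split_indicator)
  also have "\<dots> = emeasure G (?S \<inter> A)"
    by (rule nn_integral_indicator) (use A sG in auto)
  also have "\<dots> = emeasure G ((?S \<inter> A) \<inter> {0<..})"
    using a by (intro arg_cong[where f="emeasure G"]) auto
  also have "\<dots> = (\<integral>\<^sup>+ t. ennreal (indicator ?S t * g t) * indicator A t \<partial>lborel)"
    using dens A a by (auto intro!: nn_integral_cong split: split_indicator)
  also have "\<dots> = emeasure (density lborel (\<lambda>t. ennreal (indicator ?S t * g t))) A"
    by (rule emeasure_density[symmetric]) (use A gm in auto)
  finally show "emeasure (density G (\<lambda>t. ennreal (indicator ?S t))) A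
                = emeasure (density lborel (\<lambda>t. ennreal (indicator ?S t * g t))) A" .
qed (use sG in simp)

lemma density_integral_interval:
  fixes h :: "real \<Rightarrow> complex" and g :: "real \<Rightarrow> real"
  assumes sG: "sets G = sets borel"
    and dens: "\<forall>A\<in>sets borel. emeasure G (A \<inter> {0<..}) =
                 (\<integral>\<^sup>+ x. indicator (A \<inter> {0<..}) x * ennreal (g x) \<partial>lborel)"
    and a: "0 < a" and gc: "continuous_on {a..b} g" and gpos: "\<And>t. t \<in> {a..b} \<Longrightarrow> 0 \<le> g t"
    and hc: "continuous_on {a..b} h"
  shows "integral\<^sup>L G (\<lambda>t. indicator {a..b} t *\<^sub>R h t) = integral {a..b} (\<lambda>t. g t *\<^sub>R h t)"
proof -
  let ?S = "{a..b}"
  have hm: "(\<lambda>t. indicator ?S t *\<^sub>R h t) \<in> borel_measurable borel"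
    by (rule borel_measurable_continuous_on_indicator[OF _ hc]) simp
  have "(\<lambda>t. indicator ?S t *\<^sub>R g t) \<in> borel_measurable borel"
    by (rule borel_measurable_continuous_on_indicator[OF _ gc]) simp
  hence gm: "(\<lambda>t. indicator ?S t * g t) \<in> borel_measurable borel" by simp
  have im: "(\<lambda>t. indicator ?S t :: real) \<in> borel_measurable G"
    by (subst measurable_cong_sets[OF sG refl]) simp
  note restrict = density_restriction_interval[OF sG dens a gm]
  have "integral\<^sup>L G (\<lambda>t. indicator ?S t *\<^sub>R h t)
        = integral\<^sup>L G (\<lambda>t. indicator ?S t *\<^sub>R (indicator ?S t *\<^sub>R h t))"
    by (intro Bochner_Integration.integral_cong) (auto split: split_indicator)
  also have "\<dots> = integral\<^sup>L (density G (\<lambda>t. ennreal (indicator ?S t))) (\<lambda>t. indicator ?S t *\<^sub>R h t)"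
    by (rule integral_density[symmetric]) (use hm im measurable_cong_sets[OF sG refl] in auto)
  also have "\<dots> = integral\<^sup>L lborel (\<lambda>t. (indicator ?S t * g t) *\<^sub>R (indicator ?S t *\<^sub>R h t))"
    unfolding restrict
    by (rule integral_density) (use hm gm gpos in \<open>auto split: split_indicator\<close>)
  also have "\<dots> = integral\<^sup>L lborel (\<lambda>t. indicator ?S t *\<^sub>R (g t *\<^sub>R h t))"
    by (intro Bochner_Integration.integral_cong) (auto split: split_indicator)
  also have "\<dots> = integral ?S (\<lambda>t. g t *\<^sub>R h t)"
  proof -
    have "set_integrable lborel ?S (\<lambda>t. g t *\<^sub>R h t)"
      unfolding set_integrable_def
      by (rule borel_integrable_compact) (auto intro!: continuous_intros gc hc)
    from set_borel_integral_eq_integral(2)[OF this] show ?thesis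
      by (simp add: set_lebesgue_integral_def)
  qed
  finally show ?thesis .
qed

definition levy_kernel :: "complex \<Rightarrow> real \<Rightarrow> complex" where
  "levy_kernel z t = (1 + complex_of_real (t\<^sup>2)) / (1 - z * complex_of_real (t\<^sup>2))"

definition levy_kernel_deriv :: "complex \<Rightarrow> real \<Rightarrow> complex" where
  "levy_kernel_deriv z t =
     (1 + complex_of_real (t\<^sup>2)) * complex_of_real (t\<^sup>2) / (1 - z * complex_of_real (t\<^sup>2))\<^sup>2"

lemma levy_R_kernel: "levy_R G z = z * integral\<^sup>L G (levy_kernel z)"
  unfolding levy_R_def levy_kernel_def ..

lemma norm_one_plus_nonneg: "s \<ge> 0 \<Longrightarrow> norm (1 + complex_of_real s) = 1 + s"
  by (metis abs_of_nonneg add_nonneg_nonneg norm_of_real of_real_1 of_real_add zero_le_one)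

lemma kernel_bound:
  fixes z :: complex and s c :: real
  assumes c: "c > 0" and s: "s \<ge> 0" and b: "c * (1 + s) \<le> norm (1 - z * complex_of_real s)"
  shows "norm ((1 + complex_of_real s) / (1 - z * complex_of_real s)) \<le> 1 / c"
proof -
  have p: "c * (1 + s) > 0" using c s by simp
  have "norm ((1 + complex_of_real s) / (1 - z * complex_of_real s))
        = (1 + s) / norm (1 - z * complex_of_real s)"
    by (simp only: norm_divide norm_one_plus_nonneg[OF s])
  also have "\<dots> \<le> (1 + s) / (c * (1 + s))"
    by (rule divide_left_mono[OF b]) (use p b s in \<open>auto intro!: mult_pos_pos\<close>)
  also have "\<dots> = 1 / c" using p c s by (simp add: divide_simps)
  finally show ?thesis .
qed

lemma kernel_deriv_bound:
  fixes z :: complex and s c :: real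
  assumes c: "c > 0" and s: "s \<ge> 0" and b: "c * (1 + s) \<le> norm (1 - z * complex_of_real s)"
  shows "norm ((1 + complex_of_real s) * complex_of_real s / (1 - z * complex_of_real s)\<^sup>2) \<le> 1 / c\<^sup>2"
proof -
  have p: "c * (1 + s) > 0" using c s by simp
  have "norm ((1 + complex_of_real s) * complex_of_real s / (1 - z * complex_of_real s)\<^sup>2)
        = (1 + s) * s / (norm (1 - z * complex_of_real s))\<^sup>2"
    using s by (simp only: norm_divide norm_mult norm_one_plus_nonneg norm_power norm_of_real abs_of_nonneg)
  also have "\<dots> \<le> (1 + s) * s / (c * (1 + s))\<^sup>2"
    by (rule divide_left_mono) (use p b s in \<open>auto intro!: power_mono mult_pos_pos\<close>)
  also have "\<dots> = (s / (1 + s)) * (1 / c\<^sup>2)"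
  proof -
    have "u > 0 \<Longrightarrow> u * s / (c * u)\<^sup>2 = (s / u) * (1 / c\<^sup>2)" for u
      using c by (simp add: field_simps power2_eq_square)
    from this[of "1 + s"] show ?thesis using s by simp
  qed
  also have "\<dots> \<le> 1 * (1 / c\<^sup>2)" by (rule mult_right_mono) (use s in auto)
  finally show ?thesis by simp
qed

lemma kernel_taylor_bound:
  fixes z z0 :: complex and s c :: real
  assumes c: "c > 0" and s: "s \<ge> 0"
    and b: "c * (1 + s) \<le> norm (1 - z * complex_of_real s)"
    and b0: "c * (1 + s) \<le> norm (1 - z0 * complex_of_real s)"
  shows "norm ((1 + complex_of_real s) / (1 - z * complex_of_real s)
           - (1 + complex_of_real s) / (1 - z0 * complex_of_real s)
           - (z - z0) * ((1 + complex_of_real s) * complex_of_real s / (1 - z0 * complex_of_real s)\<^sup>2))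
         \<le> 1 / c ^ 3 * norm (z - z0) ^ 2"
proof -
  have p: "c * (1 + s) > 0" using c s by simp
  define S where "S = complex_of_real s"
  define A where "A = 1 - z * S"
  define A0 where "A0 = 1 - z0 * S"
  have nA: "norm A \<ge> c * (1 + s)" "norm A0 \<ge> c * (1 + s)" using b b0 by (auto simp: A_def A0_def S_def)
  have A: "A \<noteq> 0" "A0 \<noteq> 0" using nA p by auto
  have d: "A0 - A = (z - z0) * S" by (simp add: A_def A0_def algebra_simps)
  have "(1 + S) / A - (1 + S) / A0 = (1 + S) * (A0 - A) / (A * A0)"
    using A by (simp add: field_simps)
  hence e1: "(1 + S) / A - (1 + S) / A0 = (z - z0) * ((1 + S) * S / (A * A0))"
    using d by simp
  have "(1 + S) * S / (A * A0) - (1 + S) * S / A0\<^sup>2 = (1 + S) * S * (A0 - A) / (A * A0\<^sup>2)"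
    using A by (simp add: field_simps power2_eq_square)
  hence e2: "(1 + S) * S / (A * A0) - (1 + S) * S / A0\<^sup>2 = (z - z0) * ((1 + S) * S\<^sup>2 / (A * A0\<^sup>2))"
    using d by (simp add: power2_eq_square)
  have eq: "(1 + S) / A - (1 + S) / A0 - (z - z0) * ((1 + S) * S / A0\<^sup>2)
            = (z - z0)\<^sup>2 * ((1 + S) * S\<^sup>2 / (A * A0\<^sup>2))"
    unfolding e1 right_diff_distrib[symmetric] e2 by (simp add: power2_eq_square)
  have "norm ((z - z0)\<^sup>2 * ((1 + S) * S\<^sup>2 / (A * A0\<^sup>2)))
        = norm (z - z0) ^ 2 * ((1 + s) * s\<^sup>2 / (norm A * (norm A0)\<^sup>2))"
    using s by (simp only: S_def norm_divide norm_mult norm_one_plus_nonneg norm_power norm_of_real abs_of_nonneg)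
  also have "\<dots> \<le> norm (z - z0) ^ 2 * ((1 + s) * (1 + s)\<^sup>2 / ((c * (1 + s)) * (c * (1 + s))\<^sup>2))"
    by (intro mult_left_mono frac_le mult_mono power_mono) (use p nA s in \<open>auto intro!: mult_pos_pos\<close>)
  also have "\<dots> = 1 / c ^ 3 * norm (z - z0) ^ 2"
  proof -
    have "u > 0 \<Longrightarrow> u * u\<^sup>2 / ((c * u) * (c * u)\<^sup>2) = 1 / c ^ 3" for u
      using c by (simp add: field_simps power2_eq_square power3_eq_cube)
    from this[of "1 + s"] show ?thesis using s by simp
  qed
  finally show ?thesis using eq unfolding A_def A0_def S_def by simp
qed

text \<open>The weight that removes the two windows \<open>\<plusminus>[a, b]\<close> around the singularities \<open>\<plusminus>1/\<surd>x\<close>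
  of the kernel at a real point \<open>x > 0\<close>, and the part of the Levy integral away from them.\<close>
definition off_window :: "real \<Rightarrow> real \<Rightarrow> real \<Rightarrow> real" where
  "off_window a b t = 1 - indicator {a..b} t - indicator {-b..-a} t"

definition levy_far :: "real measure \<Rightarrow> real \<Rightarrow> real \<Rightarrow> complex \<Rightarrow> complex" where
  "levy_far G a b z = integral\<^sup>L G (\<lambda>t. levy_kernel z t * complex_of_real (off_window a b t))"

definition window_separated :: "complex set \<Rightarrow> real \<Rightarrow> real \<Rightarrow> real \<Rightarrow> bool" where
  "window_separated U a b c \<longleftrightarrow> c > 0 \<and>
     (\<forall>z\<in>U. \<forall>t. off_window a b t \<noteq> 0 \<longrightarrow> c * (1 + t\<^sup>2) \<le> norm (1 - z * complex_of_real (t\<^sup>2)))"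

lemma off_window_abs_le: "\<bar>off_window a b t\<bar> \<le> 1"
  by (auto simp: off_window_def split: split_indicator)

lemma off_window_measurable [measurable]: "off_window a b \<in> borel_measurable borel"
  unfolding off_window_def by measurable

lemma levy_kernel_measurable [measurable]:
  "levy_kernel z \<in> borel_measurable borel" "levy_kernel_deriv z \<in> borel_measurable borel"
  unfolding levy_kernel_def levy_kernel_deriv_def by measurable

lemma off_window_kernel_bounds:
  fixes t :: real
  assumes sep: "window_separated U a b c" and z: "z \<in> U" and z0: "z0 \<in> U"
  defines "w \<equiv> complex_of_real (off_window a b t)"
  shows "norm (levy_kernel z t * w) \<le> 1 / c"
    and "norm (levy_kernel_deriv z t * w) \<le> 1 / c\<^sup>2"
    and "norm (levy_kernel z t * w - levy_kernel z0 t * w - (z - z0) * (levy_kernel_deriv z0 t * w))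
           \<le> 1 / c ^ 3 * norm (z - z0) ^ 2"
proof -
  have c: "c > 0" using sep by (simp add: window_separated_def)
  have nw: "norm w \<le> 1" using off_window_abs_le by (simp add: w_def)
  have "norm (levy_kernel z t * w) \<le> 1 / c
        \<and> norm (levy_kernel_deriv z t * w) \<le> 1 / c\<^sup>2
        \<and> norm (levy_kernel z t * w - levy_kernel z0 t * w - (z - z0) * (levy_kernel_deriv z0 t * w))
            \<le> 1 / c ^ 3 * norm (z - z0) ^ 2"
  proof (cases "off_window a b t = 0")
    case False
    have b: "c * (1 + t\<^sup>2) \<le> norm (1 - z * complex_of_real (t\<^sup>2))"
      and b0: "c * (1 + t\<^sup>2) \<le> norm (1 - z0 * complex_of_real (t\<^sup>2))"
      using sep z z0 False by (auto simp: window_separated_def)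
    have "norm (levy_kernel z t * w) \<le> 1 / c * 1"
      unfolding norm_mult levy_kernel_def
      by (intro mult_mono nw kernel_bound[OF c _ b]) (use c in auto)
    moreover have "norm (levy_kernel_deriv z t * w) \<le> 1 / c\<^sup>2 * 1"
      unfolding norm_mult levy_kernel_deriv_def
      by (intro mult_mono nw kernel_deriv_bound[OF c _ b]) (use c in auto)
    moreover have "norm ((levy_kernel z t - levy_kernel z0 t - (z - z0) * levy_kernel_deriv z0 t) * w)
                   \<le> 1 / c ^ 3 * norm (z - z0) ^ 2 * 1"
      unfolding norm_mult levy_kernel_def levy_kernel_deriv_def
      by (intro mult_mono nw kernel_taylor_bound[OF c _ b b0]) (use c in auto)
    moreover have "(levy_kernel z t - levy_kernel z0 t - (z - z0) * levy_kernel_deriv z0 t) * w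
        = levy_kernel z t * w - levy_kernel z0 t * w - (z - z0) * (levy_kernel_deriv z0 t * w)"
      by (simp only: left_diff_distrib mult.assoc)
    ultimately show ?thesis by simp
  qed (use c in \<open>simp add: w_def\<close>)
  thus "norm (levy_kernel z t * w) \<le> 1 / c"
    and "norm (levy_kernel_deriv z t * w) \<le> 1 / c\<^sup>2"
    and "norm (levy_kernel z t * w - levy_kernel z0 t * w - (z - z0) * (levy_kernel_deriv z0 t * w))
           \<le> 1 / c ^ 3 * norm (z - z0) ^ 2" by auto
qed

lemma levy_far_integrable:
  assumes "finite_measure G" "sets G = sets borel" "window_separated U a b c" "z \<in> U"
  shows "integrable G (\<lambda>t. levy_kernel z t * complex_of_real (off_window a b t))"
  by (rule finite_measure_bounded_integral(1)[OF assms(1) _ off_window_kernel_bounds(1)[OF assms(3,4,4)]])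
     (use assms(2) in measurable)

lemma levy_far_holomorphic:
  assumes G: "finite_measure G" "sets G = sets borel"
    and U: "open U" and sep: "window_separated U a b c"
  shows "levy_far G a b holomorphic_on U"
  unfolding levy_far_def
proof (rule integral_holomorphic_quadratic[OF G(1) U])
  show "(\<lambda>t. levy_kernel z t * complex_of_real (off_window a b t)) \<in> borel_measurable G"
    "(\<lambda>t. levy_kernel_deriv z t * complex_of_real (off_window a b t)) \<in> borel_measurable G" for z
    using G(2) by measurable
  fix z z0 t assume z: "z \<in> U" and z0: "z0 \<in> U"
  note bds = off_window_kernel_bounds[OF sep z z0, of t]
  show "norm (levy_kernel z t * complex_of_real (off_window a b t)) \<le> 1 / c + 1 / c\<^sup>2"
    "norm (levy_kernel_deriv z t * complex_of_real (off_window a b t)) \<le> 1 / c + 1 / c\<^sup>2"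
  proof -
    have "0 \<le> 1 / c" "0 \<le> 1 / c\<^sup>2" using sep by (auto simp: window_separated_def)
    thus "norm (levy_kernel z t * complex_of_real (off_window a b t)) \<le> 1 / c + 1 / c\<^sup>2"
      "norm (levy_kernel_deriv z t * complex_of_real (off_window a b t)) \<le> 1 / c + 1 / c\<^sup>2"
      using bds(1,2) by linarith+
  qed
  show "norm (levy_kernel z t * complex_of_real (off_window a b t)
           - levy_kernel z0 t * complex_of_real (off_window a b t)
           - (z - z0) * (levy_kernel_deriv z0 t * complex_of_real (off_window a b t)))
        \<le> 1 / c ^ 3 * norm (z - z0) ^ 2"
    by (rule bds(3))
qed

lemma levy_far_real: "Im (levy_far G a b (complex_of_real x)) = 0"
proof -
  have "(\<lambda>t. levy_kernel (complex_of_real x) t * complex_of_real (off_window a b t))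
        = (\<lambda>t. complex_of_real ((1 + t\<^sup>2) / (1 - x * t\<^sup>2) * off_window a b t))"
    by (simp add: fun_eq_iff levy_kernel_def)
  thus ?thesis unfolding levy_far_def by (simp only: integral_complex_of_real Im_complex_of_real)
qed

text \<open>Writing \<open>p(t) = p(w) + (p(t) - p(w))\<close> separates a logarithmic part, which
  carries the jump across the segment, from a regular part that is holomorphic in \<open>w\<close>.\<close>
definition cauchy_regular :: "(complex \<Rightarrow> complex) \<Rightarrow> real \<Rightarrow> real \<Rightarrow> complex \<Rightarrow> complex" where
  "cauchy_regular p a b w =
     - integral (cbox a b) (\<lambda>t. integral (cbox 0 1) (\<lambda>u. deriv p (w + of_real u * (of_real t - w))))"

definition log_window :: "real \<Rightarrow> real \<Rightarrow> complex \<Rightarrow> complex" where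
  "log_window a b w = Ln (w - of_real a) + \<i> * pi - Ln (of_real b - w)"

text \<open>The analytic continuation, across \<open>(a, b)\<close> from below, of
  \<open>\<integral>\<^sub>a\<^sup>b p(t) / (w - t) + p(t) / (w + t) dt\<close>.\<close>
definition near_transform :: "(complex \<Rightarrow> complex) \<Rightarrow> real \<Rightarrow> real \<Rightarrow> complex \<Rightarrow> complex" where
  "near_transform p a b w =
     cauchy_regular p a b w + p w * log_window a b w
     + integral (cbox a b) (\<lambda>t. p (of_real t) / (w + of_real t))"

lemma convex_segment_point:
  fixes w t :: complex
  assumes "convex D" "w \<in> D" "t \<in> D" "0 \<le> u" "u \<le> 1"
  shows "w + complex_of_real u * (t - w) \<in> D"
proof -
  have "(1 - u) *\<^sub>R w + u *\<^sub>R t \<in> D" using convexD_alt[OF assms] by (simp add: algebra_simps)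
  moreover have "(1 - u) *\<^sub>R w + u *\<^sub>R t = w + complex_of_real u * (t - w)"
    by (simp add: scaleR_conv_of_real algebra_simps)
  ultimately show ?thesis by simp
qed

lemma difference_quotient_segment_integral:
  assumes p: "p holomorphic_on D" "open D" "convex D"
    and w: "w \<in> D" and t: "t \<in> D" and tw: "t \<noteq> w"
  shows "integral (cbox 0 1) (\<lambda>u. deriv p (w + of_real u * (t - w))) = (p t - p w) / (t - w)"
proof -
  have "((\<lambda>u. deriv p (w + of_real u * (t - w)) * (t - w)) has_integral
          (p (w + of_real 1 * (t - w)) - p (w + of_real 0 * (t - w)))) {0..1}"
  proof (rule fundamental_theorem_of_calculus)
    fix u :: real assume u: "u \<in> {0..1}"
    have "((\<lambda>\<zeta>. w + \<zeta> * (t - w)) has_field_derivative (t - w)) (at (of_real u))"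
      by (auto intro!: derivative_eq_intros)
    moreover have "(p has_field_derivative deriv p (w + of_real u * (t - w))) (at (w + of_real u * (t - w)))"
      by (rule holomorphic_derivI[OF p(1,2)]) (use convex_segment_point[OF p(3) w t] u in auto)
    ultimately have "((\<lambda>\<zeta>. p (w + \<zeta> * (t - w))) has_field_derivative
                       deriv p (w + of_real u * (t - w)) * (t - w)) (at (of_real u))"
      using DERIV_chain2[of p _ "\<lambda>\<zeta>. w + \<zeta> * (t - w)" "of_real u" "t - w" UNIV] by simp
    thus "((\<lambda>u. p (w + of_real u * (t - w))) has_vector_derivative deriv p (w + of_real u * (t - w)) * (t - w))
            (at u within {0..1})"
      by (rule has_vector_derivative_real_field)
  qed simp
  hence "((\<lambda>u. (t - w) * deriv p (w + of_real u * (t - w))) has_integral (p t - p w)) (cbox 0 1)"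
    by (simp add: mult.commute)
  moreover have "t - w \<noteq> 0" using tw by simp
  ultimately have "((\<lambda>u. deriv p (w + of_real u * (t - w))) has_integral (p t - p w) / (t - w)) (cbox 0 1)"
    using has_integral_mult_right_iff by blast
  thus ?thesis by (rule integral_unique)
qed

lemma segment_average_continuous:
  fixes h :: "complex \<Rightarrow> complex"
  assumes h: "continuous_on D h" "convex D" and ab: "complex_of_real ` {a..b} \<subseteq> D"
  shows "continuous_on (D \<times> cbox a b)
           (\<lambda>(w, t). integral (cbox 0 1) (\<lambda>u. (1 - of_real u) ^ k * h (w + of_real u * (of_real t - w))))"
proof -
  have inD: "w + of_real u * (of_real t - w) \<in> D" if "w \<in> D" "t \<in> {a..b}" "u \<in> {0..1}" for w t u
  proof -
    have "of_real t \<in> D" using ab that(2) by auto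
    from convex_segment_point[OF h(2) that(1) this] that(3) show ?thesis by auto
  qed
  have "continuous_on ((D \<times> {a..b}) \<times> {0..1})
          (\<lambda>x. h (fst (fst x) + of_real (snd x) * (of_real (snd (fst x)) - fst (fst x))))"
    by (rule continuous_on_compose2[OF h(1)]) (auto intro!: continuous_intros inD)
  hence "continuous_on ((D \<times> {a..b}) \<times> {0..1})
          (\<lambda>x. (1 - of_real (snd x)) ^ k * h (fst (fst x) + of_real (snd x) * (of_real (snd (fst x)) - fst (fst x))))"
    by (intro continuous_intros)
  hence "continuous_on (D \<times> {a..b})
           (\<lambda>x. integral (cbox 0 1) (\<lambda>u. (1 - of_real u) ^ k * h (fst x + of_real u * (of_real (snd x) - fst x))))"
    by (intro integral_continuous_on_param) (simp add: case_prod_beta')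
  thus ?thesis by (simp add: case_prod_beta')
qed

lemma segment_average_has_derivative:
  assumes f: "f holomorphic_on D" "open D" "convex D" and t: "t \<in> D" and w: "w \<in> D"
  shows "((\<lambda>w. integral (cbox 0 1) (\<lambda>u. f (w + of_real u * (t - w)))) has_field_derivative
           integral (cbox 0 1) (\<lambda>u. (1 - of_real u) * deriv f (w + of_real u * (t - w)))) (at w within D)"
proof -
  have inD: "w' + of_real u * (t - w') \<in> D" if "w' \<in> D" "u \<in> cbox 0 1" for w' u
    using convex_segment_point[OF f(3) that(1) t] that(2) by auto
  have cf: "continuous_on D f" and cf': "continuous_on D (deriv f)"
    using f by (auto intro!: holomorphic_on_imp_continuous_on holomorphic_deriv)
  show ?thesis
  proof (rule leibniz_rule_field_derivative)
    fix w' u assume w': "w' \<in> D" and u: "u \<in> cbox (0::real) 1"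
    have "((\<lambda>w. w + of_real u * (t - w)) has_field_derivative (1 - of_real u)) (at w' within D)"
      by (auto intro!: derivative_eq_intros)
    from DERIV_chain2[OF holomorphic_derivI[OF f(1,2) inD[OF w' u]] this]
    show "((\<lambda>w. f (w + of_real u * (t - w))) has_field_derivative
            (1 - of_real u) * deriv f (w' + of_real u * (t - w'))) (at w' within D)"
      by (simp add: mult.commute)
  next
    fix w' assume w': "w' \<in> D"
    have "continuous_on (cbox 0 1) (\<lambda>u. f (w' + of_real u * (t - w')))"
      by (rule continuous_on_compose2[OF cf]) (use inD w' in \<open>auto intro!: continuous_intros\<close>)
    thus "(\<lambda>u. f (w' + of_real u * (t - w'))) integrable_on cbox 0 1"
      by (rule integrable_continuous)
  next
    have "continuous_on (D \<times> cbox 0 1) (\<lambda>x. (1 - of_real (snd x)) * deriv f (fst x + of_real (snd x) * (t - fst x)))"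
      by (intro continuous_intros continuous_on_compose2[OF cf']) (use inD in \<open>auto intro!: continuous_intros\<close>)
    thus "continuous_on (D \<times> cbox 0 1) (\<lambda>(x, u). (1 - of_real u) * deriv f (x + of_real u * (t - x)))"
      by (simp add: case_prod_beta')
  qed (use w f in auto)
qed

lemma segment_average_integral_holomorphic:
  assumes f: "f holomorphic_on D" "open D" "convex D"
    and ab: "complex_of_real ` {a..b} \<subseteq> D"
  shows "(\<lambda>w. integral (cbox a b) (\<lambda>t. integral (cbox 0 1) (\<lambda>u. f (w + of_real u * (of_real t - w)))))
           holomorphic_on D"
proof -
  define q where "q w t = integral (cbox 0 1) (\<lambda>u. f (w + of_real u * (of_real t - w)))" for w t
  define q' where "q' w t = integral (cbox 0 1) (\<lambda>u. (1 - of_real u) * deriv f (w + of_real u * (of_real t - w)))" for w t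
  have qc: "continuous_on (D \<times> cbox a b) (\<lambda>(w, t). q w t)"
    using segment_average_continuous[OF holomorphic_on_imp_continuous_on[OF f(1)] f(3) ab, of 0]
    by (simp add: q_def)
  have q'c: "continuous_on (D \<times> cbox a b) (\<lambda>(w, t). q' w t)"
    using segment_average_continuous[OF holomorphic_on_imp_continuous_on[OF holomorphic_deriv[OF f(1,2)]] f(3) ab, of 1]
    by (simp add: q'_def)
  have "((\<lambda>w. integral (cbox a b) (q w)) has_field_derivative integral (cbox a b) (q' w)) (at w within D)"
    if "w \<in> D" for w
  proof (rule leibniz_rule_field_derivative[where fx=q'])
    fix w' t assume "w' \<in> D" "t \<in> cbox a b"
    thus "((\<lambda>w. q w t) has_field_derivative q' w' t) (at w' within D)"
      unfolding q_def q'_def using ab by (intro segment_average_has_derivative[OF f]) auto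
  next
    fix w' assume w': "w' \<in> D"
    have "continuous_on (cbox a b) (q w')"
      using continuous_on_compose2[OF qc, of "cbox a b" "\<lambda>t. (w', t)"] w'
      by (auto simp: continuous_on_Pair continuous_on_const continuous_on_id)
    thus "q w' integrable_on cbox a b" by (rule integrable_continuous)
  qed (use that f q'c in auto)
  thus ?thesis unfolding holomorphic_on_def field_differentiable_def q_def by blast
qed

text \<open>By the difference-quotient formula, \<open>cauchy_regular p a b w = \<integral>\<^sub>a\<^sup>b (p(t) - p(w)) / (w - t) dt\<close>,
  written so that it is visibly holomorphic in \<open>w\<close>.\<close>
lemma cauchy_regular_holomorphic:
  assumes "p holomorphic_on D" "open D" "convex D" "complex_of_real ` {a..b} \<subseteq> D"
  shows "cauchy_regular p a b holomorphic_on D"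
  unfolding cauchy_regular_def
  by (intro holomorphic_intros segment_average_integral_holomorphic holomorphic_deriv) (use assms in auto)

lemma log_window_integral:
  fixes w :: complex and a b :: real
  assumes w: "Im w < 0" and ab: "a \<le> b"
  shows "integral (cbox a b) (\<lambda>t. 1 / (w - of_real t)) = log_window a b w"
proof -
  have nn: "of_real t - w \<notin> \<real>\<^sub>\<le>\<^sub>0" for t :: real
    using w by (auto simp: complex_nonpos_Reals_iff)
  have ne: "w - of_real t \<noteq> 0" for t :: real
    using w by (auto simp: complex_eq_iff)
  have "((\<lambda>t. 1 / (w - of_real t)) has_integral ((- Ln (of_real b - w)) - (- Ln (of_real a - w)))) {a..b}"
  proof (rule fundamental_theorem_of_calculus[OF ab])
    fix t :: real assume "t \<in> {a..b}"
    have "((\<lambda>\<zeta>. \<zeta> - w) has_field_derivative 1) (at (of_real t))"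
      by (auto intro!: derivative_eq_intros)
    from DERIV_chain2[OF has_field_derivative_Ln[OF nn[of t]] this]
    have "((\<lambda>\<zeta>. - Ln (\<zeta> - w)) has_field_derivative - (inverse (of_real t - w) * 1)) (at (of_real t))"
      by (rule DERIV_minus)
    moreover have "- (inverse (of_real t - w) * 1) = 1 / (w - of_real t)"
      using ne[of t] by (simp add: field_simps)
    ultimately show "((\<lambda>t. - Ln (of_real t - w)) has_vector_derivative 1 / (w - of_real t)) (at t within {a..b})"
      by (intro has_vector_derivative_real_field) simp
  qed
  hence "integral (cbox a b) (\<lambda>t. 1 / (w - of_real t)) = Ln (of_real a - w) - Ln (of_real b - w)"
    by (simp add: integral_unique)
  also have "Ln (of_real a - w) = Ln (w - of_real a) + \<i> * pi"
    using Ln_minus[of "w - of_real a"] ne[of a] w by simp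
  finally show ?thesis by (simp add: log_window_def)
qed

lemma log_window_holomorphic:
  assumes "U \<subseteq> {w. a < Re w \<and> Re w < b}"
  shows "log_window a b holomorphic_on U"
proof -
  have "w - of_real a \<notin> \<real>\<^sub>\<le>\<^sub>0" "of_real b - w \<notin> \<real>\<^sub>\<le>\<^sub>0" if "w \<in> U" for w
    using assms that by (auto simp: complex_nonpos_Reals_iff)
  thus ?thesis unfolding log_window_def by (intro holomorphic_intros) auto
qed

lemma reflected_cauchy_holomorphic:
  fixes p :: "complex \<Rightarrow> complex" and a b :: real
  assumes pc: "continuous_on {a..b} (\<lambda>t. p (of_real t))" and a: "0 \<le> a"
    and U: "U \<subseteq> {w. Re w > 0}" "convex U"
  shows "(\<lambda>w. integral (cbox a b) (\<lambda>t. p (of_real t) / (w + of_real t))) holomorphic_on U"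
proof -
  have nz: "w + of_real t \<noteq> 0" if "w \<in> U" "t \<in> {a..b}" for w t
  proof -
    have "Re (w + of_real t) > 0" using that U a by auto
    thus ?thesis by (metis less_irrefl zero_complex.sel(1))
  qed
  have "((\<lambda>w. integral (cbox a b) (\<lambda>t. p (of_real t) / (w + of_real t))) has_field_derivative
        integral (cbox a b) (\<lambda>t. - p (of_real t) / (w + of_real t)\<^sup>2)) (at w within U)" if w: "w \<in> U" for w
  proof (rule leibniz_rule_field_derivative)
    fix w' t assume w': "w' \<in> U" and t: "t \<in> cbox a b"
    show "((\<lambda>w. p (of_real t) / (w + of_real t)) has_field_derivative - p (of_real t) / (w' + of_real t)\<^sup>2)
            (at w' within U)"
      using nz[OF w'] t by (auto intro!: derivative_eq_intros simp: power2_eq_square field_simps)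
  next
    fix w' assume w': "w' \<in> U"
    have "continuous_on {a..b} (\<lambda>t. p (of_real t) / (w' + of_real t))"
      by (intro continuous_intros pc) (use nz w' in auto)
    thus "(\<lambda>t. p (of_real t) / (w' + of_real t)) integrable_on cbox a b"
      by (simp add: integrable_continuous_real)
  next
    have "continuous_on (U \<times> {a..b}) (\<lambda>x. - p (of_real (snd x)) / (fst x + of_real (snd x))\<^sup>2)"
      by (intro continuous_intros continuous_on_compose2[OF pc]) (use nz in auto)
    thus "continuous_on (U \<times> cbox a b) (\<lambda>(w, t). - p (of_real t) / (w + of_real t)\<^sup>2)"
      by (simp add: case_prod_beta')
  qed (use w U in auto)
  thus ?thesis unfolding holomorphic_on_def field_differentiable_def by blast
qed

lemma near_transform_holomorphic:
  assumes p: "p holomorphic_on D" "open D" "convex D"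
    and ab: "complex_of_real ` {a..b} \<subseteq> D" "0 \<le> a"
    and V: "V \<subseteq> D" "convex V" "V \<subseteq> {w. a < Re w \<and> Re w < b}"
  shows "near_transform p a b holomorphic_on V"
proof -
  have "continuous_on {a..b} (\<lambda>t. p (of_real t))"
    by (rule continuous_on_compose2[OF holomorphic_on_imp_continuous_on[OF p(1)]])
       (use ab in \<open>auto intro!: continuous_intros\<close>)
  moreover have "V \<subseteq> {w. Re w > 0}" using V(3) ab(2) by auto
  ultimately show ?thesis
    unfolding near_transform_def
    using cauchy_regular_holomorphic[OF p ab(1)] log_window_holomorphic[OF V(3)]
          holomorphic_on_subset[OF p(1) V(1)]
    by (intro holomorphic_intros reflected_cauchy_holomorphic[OF _ ab(2) _ V(2)])
       (auto intro: holomorphic_on_subset[OF _ V(1)])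
qed

lemma near_transform_eq_integral:
  assumes p: "p holomorphic_on D" "open D" "convex D"
    and ab: "complex_of_real ` {a..b} \<subseteq> D" "a \<le> b"
    and w: "w \<in> D" "Im w < 0"
  shows "integral (cbox a b) (\<lambda>t. p (of_real t) / (w - of_real t) + p (of_real t) / (w + of_real t))
         = near_transform p a b w"
proof -
  have nz: "w - of_real t \<noteq> 0" "w + of_real t \<noteq> 0" "w \<noteq> of_real t" for t :: real
    using w(2) by (auto simp: complex_eq_iff)
  have pc: "continuous_on {a..b} (\<lambda>t. p (of_real t))"
    by (rule continuous_on_compose2[OF holomorphic_on_imp_continuous_on[OF p(1)]])
       (use ab in \<open>auto intro!: continuous_intros\<close>)
  have i1: "(\<lambda>t. (p (of_real t) - p w) / (w - of_real t)) integrable_on cbox a b"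
    and i2: "(\<lambda>t. 1 / (w - of_real t)) integrable_on cbox a b"
    and i3: "(\<lambda>t. p (of_real t) / (w - of_real t)) integrable_on cbox a b"
    and i4: "(\<lambda>t. p (of_real t) / (w + of_real t)) integrable_on cbox a b"
    by (auto intro!: integrable_continuous_real continuous_intros pc simp: nz)
  have regular: "integral (cbox a b) (\<lambda>t. (p (of_real t) - p w) / (w - of_real t)) = cauchy_regular p a b w"
  proof -
    have "(p (of_real t) - p w) / (w - of_real t)
          = - integral (cbox 0 1) (\<lambda>u. deriv p (w + of_real u * (of_real t - w)))" if "t \<in> cbox a b" for t
    proof -
      have "of_real t \<in> D" "complex_of_real t \<noteq> w" using that ab nz(1)[of t] by auto
      from difference_quotient_segment_integral[OF p w(1) this] show ?thesis
        using nz(1)[of t] by (simp add: field_simps)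
    qed
    hence "integral (cbox a b) (\<lambda>t. (p (of_real t) - p w) / (w - of_real t))
           = integral (cbox a b) (\<lambda>t. - integral (cbox 0 1) (\<lambda>u. deriv p (w + of_real u * (of_real t - w))))"
      by (rule integral_cong)
    thus ?thesis by (simp add: cauchy_regular_def integral_neg)
  qed
  have "integral (cbox a b) (\<lambda>t. p (of_real t) / (w - of_real t))
        = integral (cbox a b) (\<lambda>t. (p (of_real t) - p w) / (w - of_real t) + p w * (1 / (w - of_real t)))"
    by (rule integral_cong) (simp add: diff_divide_distrib)
  also have "\<dots> = cauchy_regular p a b w + p w * log_window a b w"
    by (simp only: integral_add[OF i1 integrable_on_mult_right[OF i2]] integral_mult_right regular
                   log_window_integral[OF w(2) ab(2)])
  finally show ?thesis
    by (simp only: integral_add[OF i3 i4] near_transform_def)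
qed

lemma Im_integral_real:
  fixes f :: "real \<Rightarrow> complex"
  assumes "negligible N" "\<And>t. t \<in> S - N \<Longrightarrow> Im (f t) = 0"
  shows "Im (integral S f) = 0"
proof (cases "f integrable_on S")
  case True
  have "Im (integral S f) = integral S (Im \<circ> f)"
    by (rule integral_linear[OF True bounded_linear_Im, symmetric])
  also have "\<dots> = integral S (\<lambda>_. 0)"
    by (rule integral_spike[OF assms(1)]) (use assms(2) in auto)
  finally show ?thesis by simp
qed (simp add: not_integrable_integral)

text \<open>At an interior point \<open>t\<^sub>0\<close> of the segment, for \<open>p\<close> real on the segment, the imaginary part of
  \<open>near_transform\<close> is the jump \<open>\<pi> p(t\<^sub>0)\<close> of the logarithmic part: all other terms are real.\<close>
lemma near_transform_real_point:
  assumes p: "p holomorphic_on D" "open D" "convex D"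
    and ab: "complex_of_real ` {a..b} \<subseteq> D" and t0: "a < t0" "t0 < b"
    and real: "\<And>t. t \<in> {a..b} \<Longrightarrow> Im (p (of_real t)) = 0"
  shows "Im (near_transform p a b (of_real t0)) = pi * Re (p (of_real t0))"
proof -
  let ?T = "complex_of_real t0"
  have T: "?T \<in> D" using ab t0 by auto
  have "Im (integral (cbox a b) (\<lambda>t. integral (cbox 0 1) (\<lambda>u. deriv p (?T + of_real u * (of_real t - ?T))))) = 0"
  proof (rule Im_integral_real[of "{t0}"])
    fix t assume t: "t \<in> cbox a b - {t0}"
    have "of_real t \<in> D" "complex_of_real t \<noteq> ?T" using t ab by auto
    from difference_quotient_segment_integral[OF p T this]
    show "Im (integral (cbox 0 1) (\<lambda>u. deriv p (?T + of_real u * (of_real t - ?T)))) = 0"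
      using real[of t] real[of t0] t t0 by (simp add: Im_divide)
  qed simp
  hence "Im (cauchy_regular p a b ?T) = 0" by (simp add: cauchy_regular_def)
  moreover have "Im (integral (cbox a b) (\<lambda>t. p (of_real t) / (?T + of_real t))) = 0"
    by (rule Im_integral_real[of "{}"]) (use real in \<open>auto simp: Im_divide\<close>)
  moreover have "log_window a b ?T = of_real (ln (t0 - a) - ln (b - t0)) + \<i> * pi"
    using t0 by (simp add: log_window_def Ln_of_real flip: of_real_diff)
  ultimately show ?thesis
    using real[of t0] t0 by (simp add: near_transform_def)
qed

lemma kernel_real_separation:
  fixes x a b s :: real
  assumes x: "x > 0" and xa: "x * a\<^sup>2 < 1" and xb: "1 < x * b\<^sup>2"
    and s: "s \<ge> 0" and sab: "s < a\<^sup>2 \<or> b\<^sup>2 < s"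
  shows "min ((1 - x * a\<^sup>2) / (1 + a\<^sup>2)) ((x * b\<^sup>2 - 1) / (1 + b\<^sup>2)) * (1 + s) \<le> \<bar>1 - x * s\<bar>"
proof (cases "s < a\<^sup>2")
  case True
  have "(1 - x * a\<^sup>2) / (1 + a\<^sup>2) * (1 + s) \<le> 1 - x * s"
  proof -
    have "(1 - x * a\<^sup>2) * (1 + s) \<le> (1 - x * s) * (1 + a\<^sup>2)"
    proof -
      have "(1 - x * s) * (1 + a\<^sup>2) - (1 - x * a\<^sup>2) * (1 + s) = (a\<^sup>2 - s) * (1 + x)"
        by (simp add: algebra_simps)
      moreover have "(a\<^sup>2 - s) * (1 + x) \<ge> 0" using True x by auto
      ultimately show ?thesis by linarith
    qed
    moreover have "(1 - x * a\<^sup>2) / (1 + a\<^sup>2) * (1 + s) = (1 - x * a\<^sup>2) * (1 + s) / (1 + a\<^sup>2)" by simp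
    moreover have "(1 + a\<^sup>2) > 0" by (simp add: add_pos_nonneg)
    ultimately show ?thesis by (simp add: pos_divide_le_eq)
  qed
  moreover have "min ((1 - x * a\<^sup>2) / (1 + a\<^sup>2)) ((x * b\<^sup>2 - 1) / (1 + b\<^sup>2)) * (1 + s) \<le> (1 - x * a\<^sup>2) / (1 + a\<^sup>2) * (1 + s)"
    using s by (intro mult_right_mono) auto
  ultimately show ?thesis by linarith
next
  case False
  hence sb: "s > b\<^sup>2" using sab by auto
  have "(x * b\<^sup>2 - 1) / (1 + b\<^sup>2) * (1 + s) \<le> x * s - 1"
  proof -
    have "(x * b\<^sup>2 - 1) * (1 + s) \<le> (x * s - 1) * (1 + b\<^sup>2)"
    proof -
      have "(x * s - 1) * (1 + b\<^sup>2) - (x * b\<^sup>2 - 1) * (1 + s) = (s - b\<^sup>2) * (1 + x)"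
        by (simp add: algebra_simps)
      moreover have "(s - b\<^sup>2) * (1 + x) \<ge> 0" using sb x by auto
      ultimately show ?thesis by linarith
    qed
    moreover have "(x * b\<^sup>2 - 1) / (1 + b\<^sup>2) * (1 + s) = (x * b\<^sup>2 - 1) * (1 + s) / (1 + b\<^sup>2)" by simp
    moreover have "(1 + b\<^sup>2) > 0" by (simp add: add_pos_nonneg)
    ultimately show ?thesis by (simp add: pos_divide_le_eq)
  qed
  moreover have "min ((1 - x * a\<^sup>2) / (1 + a\<^sup>2)) ((x * b\<^sup>2 - 1) / (1 + b\<^sup>2)) * (1 + s) \<le> (x * b\<^sup>2 - 1) / (1 + b\<^sup>2) * (1 + s)"
    using s by (intro mult_right_mono) auto
  ultimately show ?thesis by linarith
qed

lemma kernel_separation_perturb: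
  fixes z :: complex and x s c :: real
  assumes base: "c * (1 + s) \<le> \<bar>1 - x * s\<bar>" and s: "s \<ge> 0" and c: "c \<ge> 0"
    and z: "norm (z - of_real x) < c / 2"
  shows "c / 2 * (1 + s) \<le> norm (1 - z * of_real s)"
proof -
  have "1 - z * of_real s = of_real (1 - x * s) - (z - of_real x) * of_real s"
    by (simp add: algebra_simps)
  hence "norm (of_real (1 - x * s) :: complex) - norm ((z - of_real x) * of_real s) \<le> norm (1 - z * of_real s)"
    by (simp only: norm_triangle_ineq2)
  moreover have "norm ((z - of_real x) * of_real s) = norm (z - of_real x) * s"
    using s by (simp add: norm_mult)
  moreover have "norm (z - of_real x) * s \<le> c / 2 * s"
    using z s by (intro mult_right_mono) auto
  moreover have "c / 2 * (1 + s) = c / 2 + c / 2 * s" "c * (1 + s) = c + c * s"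
    by (simp_all add: algebra_simps)
  ultimately show ?thesis using base s c by (simp only: norm_of_real)
qed

lemma off_window_nonzero:
  assumes "0 < a" "a \<le> b" and "off_window a b t \<noteq> 0"
  shows "t\<^sup>2 < a\<^sup>2 \<or> b\<^sup>2 < t\<^sup>2"
proof -
  have "t \<notin> {a..b}" "t \<notin> {-b..-a}"
    using assms by (auto simp: off_window_def split: split_indicator)
  hence "\<bar>t\<bar> < a \<or> b < \<bar>t\<bar>" using assms(1) by (auto simp: abs_if)
  thus ?thesis
  proof
    assume "\<bar>t\<bar> < a"
    hence "\<bar>t\<bar>\<^sup>2 < a\<^sup>2" by (intro power_strict_mono) auto
    thus ?thesis by simp
  next
    assume "b < \<bar>t\<bar>"
    hence "b\<^sup>2 < \<bar>t\<bar>\<^sup>2" using assms(1,2) by (intro power_strict_mono) auto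
    thus ?thesis by simp
  qed
qed

lemma window_separation:
  fixes x a b :: real
  assumes x: "x > 0" and ab: "0 < a" "a \<le> b" and xa: "x * a\<^sup>2 < 1" and xb: "1 < x * b\<^sup>2"
  obtains c where "window_separated (ball (of_real x) c) a b c"
proof
  define c where "c = min ((1 - x * a\<^sup>2) / (1 + a\<^sup>2)) ((x * b\<^sup>2 - 1) / (1 + b\<^sup>2)) / 2"
  have c: "c > 0" using xa xb by (auto simp: c_def add_pos_nonneg)
  have "c * (1 + t\<^sup>2) \<le> norm (1 - z * of_real (t\<^sup>2))"
    if z: "z \<in> ball (of_real x) c" and t: "off_window a b t \<noteq> 0" for z :: complex and t
  proof -
    have "(2 * c) * (1 + t\<^sup>2) \<le> \<bar>1 - x * t\<^sup>2\<bar>"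
      using kernel_real_separation[OF x xa xb _ off_window_nonzero[OF ab t]] by (simp add: c_def)
    moreover have "norm (z - of_real x) < (2 * c) / 2"
      using z by (simp add: dist_norm norm_minus_commute)
    ultimately show ?thesis using kernel_separation_perturb[of "2 * c" "t\<^sup>2" x z] c by simp
  qed
  thus "window_separated (ball (of_real x) c) a b c"
    using c by (auto simp: window_separated_def)
qed

lemma levy_kernel_even: "levy_kernel z (- t) = levy_kernel z t"
  by (simp add: levy_kernel_def)

lemma levy_kernel_denominator_bound:
  assumes z: "Im z > 0" and t: "t \<noteq> 0"
  shows "1 - z * complex_of_real (t\<^sup>2) \<noteq> 0" "Im z * t\<^sup>2 \<le> norm (1 - z * complex_of_real (t\<^sup>2))"
proof -
  have "\<bar>Im (1 - z * complex_of_real (t\<^sup>2))\<bar> \<le> norm (1 - z * complex_of_real (t\<^sup>2))"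
    by (rule abs_Im_le_cmod)
  thus le: "Im z * t\<^sup>2 \<le> norm (1 - z * complex_of_real (t\<^sup>2))" using z by simp
  moreover have "Im z * t\<^sup>2 > 0" using z t by simp
  ultimately show "1 - z * complex_of_real (t\<^sup>2) \<noteq> 0" by auto
qed

lemma levy_kernel_continuous_on:
  assumes "Im z > 0" "0 \<notin> S"
  shows "continuous_on S (levy_kernel z)"
proof -
  have "1 - z * complex_of_real (t\<^sup>2) \<noteq> 0" if "t \<in> S" for t
  proof -
    have "t \<noteq> 0" using assms(2) that by auto
    thus ?thesis by (rule levy_kernel_denominator_bound(1)[OF assms(1)])
  qed
  thus ?thesis unfolding levy_kernel_def by (intro continuous_intros) simp_all
qed

lemma levy_kernel_window_bound:
  assumes z: "Im z > 0" and t: "0 < a" "a \<le> \<bar>t\<bar>" "\<bar>t\<bar> \<le> b"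
  shows "norm (levy_kernel z t) \<le> (1 + b\<^sup>2) / (Im z * a\<^sup>2)"
proof -
  have "a\<^sup>2 \<le> \<bar>t\<bar>\<^sup>2" "\<bar>t\<bar>\<^sup>2 \<le> b\<^sup>2" using t by (intro power_mono; simp)+
  hence ab2: "a\<^sup>2 \<le> t\<^sup>2" "t\<^sup>2 \<le> b\<^sup>2" by simp_all
  have "Im z * a\<^sup>2 \<le> Im z * t\<^sup>2" using z ab2 by (intro mult_left_mono) auto
  also have "\<dots> \<le> norm (1 - z * complex_of_real (t\<^sup>2))"
    by (rule levy_kernel_denominator_bound(2)[OF z]) (use t in auto)
  finally have denom: "Im z * a\<^sup>2 \<le> norm (1 - z * complex_of_real (t\<^sup>2))" .
  have "norm (levy_kernel z t) = (1 + t\<^sup>2) / norm (1 - z * complex_of_real (t\<^sup>2))"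
    by (simp only: levy_kernel_def norm_divide norm_one_plus_nonneg[OF zero_le_power2])
  also have "\<dots> \<le> (1 + b\<^sup>2) / (Im z * a\<^sup>2)"
    by (rule frac_le) (use ab2 denom z t in auto)
  finally show ?thesis .
qed

text \<open>Splitting the Levy integral into the far part and the two windows; by symmetry of \<open>G\<close>
  the window \<open>[-b, -a]\<close> contributes as much as \<open>[a, b]\<close>, where \<open>G\<close> has the density \<open>g\<close>.\<close>
lemma levy_integral_split:
  fixes g :: "real \<Rightarrow> real"
  assumes symG: "symmetric_finite_measure G"
    and dens: "\<forall>A\<in>sets borel. emeasure G (A \<inter> {0<..}) =
                 (\<integral>\<^sup>+ x. indicator (A \<inter> {0<..}) x * ennreal (g x) \<partial>lborel)"
    and ab: "0 < a" and gc: "continuous_on {a..b} g" and gpos: "\<And>t. t \<in> {a..b} \<Longrightarrow> 0 \<le> g t"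
    and z: "Im z > 0"
    and far: "integrable G (\<lambda>t. levy_kernel z t * complex_of_real (off_window a b t))"
  shows "integral\<^sup>L G (levy_kernel z) = levy_far G a b z + 2 * integral {a..b} (\<lambda>t. g t *\<^sub>R levy_kernel z t)"
proof -
  have sG: "sets G = sets borel" and fmG: "finite_measure G"
    using symG by (auto simp: symmetric_finite_measure_def)
  define win where "win S t = indicator S t *\<^sub>R levy_kernel z t" for S t
  have win_meas: "win S \<in> borel_measurable borel" if "S \<subseteq> {a..b} \<union> {-b..-a}" "closed S" for S
    unfolding win_def
    by (rule borel_measurable_continuous_on_indicator)
       (use that ab in \<open>auto intro!: levy_kernel_continuous_on[OF z]\<close>)
  have win_int: "integrable G (win S)" if "S \<subseteq> {a..b} \<union> {-b..-a}" "closed S" for S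
  proof (rule finite_measure_bounded_integral(1)[OF fmG])
    show "win S \<in> borel_measurable G"
      using win_meas[OF that] by (subst measurable_cong_sets[OF sG refl])
    show "norm (win S t) \<le> (1 + b\<^sup>2) / (Im z * a\<^sup>2)" for t
    proof (cases "t \<in> S")
      case True
      hence "a \<le> \<bar>t\<bar>" "\<bar>t\<bar> \<le> b" using that(1) ab by auto
      thus ?thesis using levy_kernel_window_bound[OF z ab] True by (simp add: win_def)
    qed (use z in \<open>simp add: win_def\<close>)
  qed
  have "integral\<^sup>L G (levy_kernel z)
        = integral\<^sup>L G (\<lambda>t. levy_kernel z t * complex_of_real (off_window a b t) + win {a..b} t + win {-b..-a} t)"
    by (intro Bochner_Integration.integral_cong)
       (use ab in \<open>auto simp: win_def off_window_def split: split_indicator\<close>)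
  also have "\<dots> = levy_far G a b z + integral\<^sup>L G (win {a..b}) + integral\<^sup>L G (win {-b..-a})"
    using far win_int[of "{a..b}"] win_int[of "{-b..-a}"] by (simp add: levy_far_def)
  also have "integral\<^sup>L G (win {-b..-a}) = integral\<^sup>L G (win {a..b})"
  proof -
    have "integral\<^sup>L G (win {a..b}) = integral\<^sup>L G (\<lambda>t. win {-b..-a} (- t))"
      by (intro Bochner_Integration.integral_cong) (auto simp: win_def levy_kernel_even split: split_indicator)
    also have "\<dots> = integral\<^sup>L G (win {-b..-a})"
      by (rule symmetric_measure_integral_reflect[OF symG win_meas]) auto
    finally show ?thesis by simp
  qed
  also have "integral\<^sup>L G (win {a..b}) = integral {a..b} (\<lambda>t. g t *\<^sub>R levy_kernel z t)"
    unfolding win_def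
    by (rule density_integral_interval[OF sG dens ab gc gpos levy_kernel_continuous_on[OF z]]) (use ab in auto)
  finally show ?thesis by simp
qed

lemma Im_inverse_csqrt:
  assumes z: "Im z > 0"
  shows "Im (1 / csqrt z) < 0"
proof -
  have "Re z \<le> \<bar>Re z\<bar>" by simp
  also have "\<bar>Re z\<bar> = sqrt ((Re z)\<^sup>2)" by simp
  also have "sqrt ((Re z)\<^sup>2) < sqrt ((Re z)\<^sup>2 + (Im z)\<^sup>2)" using z by (intro real_sqrt_less_mono) simp
  also have "\<dots> = norm z" by (simp add: cmod_def)
  finally have "Im (csqrt z) > 0" using z by simp
  moreover have "Im (1 / u) < 0" if "Im u > 0" for u :: complex
  proof -
    have "Im (1 / u) = - Im u / ((Re u)\<^sup>2 + (Im u)\<^sup>2)"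
      unfolding inverse_eq_divide[symmetric] by (rule inverse_complex.sel(2))
    moreover have "(Re u)\<^sup>2 + (Im u)\<^sup>2 > 0" using that by (simp add: add_nonneg_pos)
    ultimately show ?thesis using that by (simp add: divide_neg_pos)
  qed
  ultimately show ?thesis by blast
qed

lemma partial_fractions:
  fixes z w T P :: complex
  assumes zw: "z * w\<^sup>2 = 1" and n: "w - T \<noteq> 0" "w + T \<noteq> 0"
  shows "P / (1 - z * T\<^sup>2) = (P / (w - T) + P / (w + T)) / (2 * z * w)"
proof -
  have nz: "z \<noteq> 0" "w \<noteq> 0" using zw by auto
  have "(P / (w - T) + P / (w + T)) / (2 * z * w) = P * (2 * w) / ((w - T) * (w + T) * (2 * z * w))"
    using n nz by (simp add: field_simps)
  also have "\<dots> = P * (2 * w) / ((z * ((w - T) * (w + T))) * (2 * w))"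
    by (simp add: algebra_simps)
  also have "\<dots> = P / (z * ((w - T) * (w + T)))"
    using nz by simp
  also have "z * ((w - T) * (w + T)) = 1 - z * T\<^sup>2"
    using zw by (simp add: algebra_simps power2_eq_square)
  finally show ?thesis ..
qed

lemma levy_window_integral:
  fixes g :: "real \<Rightarrow> real"
  assumes p: "p holomorphic_on D" "open D" "convex D"
    and ab: "complex_of_real ` {a..b} \<subseteq> D" "a \<le> b"
    and pg: "\<And>t. t \<in> {a..b} \<Longrightarrow> p (of_real t) = of_real ((1 + t\<^sup>2) * g t)"
    and z: "Im z > 0" and w: "1 / csqrt z \<in> D"
  shows "2 * z * integral {a..b} (\<lambda>t. g t *\<^sub>R levy_kernel z t) = csqrt z * near_transform p a b (1 / csqrt z)"
proof -
  define w where "w = 1 / csqrt z"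
  have Imw: "Im w < 0" unfolding w_def by (rule Im_inverse_csqrt[OF z])
  have z0: "z \<noteq> 0" using z by auto
  have zw: "z * w\<^sup>2 = 1" unfolding w_def power_divide power2_csqrt using z0 by simp
  have wt: "w - complex_of_real t \<noteq> 0" "w + complex_of_real t \<noteq> 0" for t
    using Imw by (auto simp: complex_eq_iff)
  have "integral {a..b} (\<lambda>t. g t *\<^sub>R levy_kernel z t)
        = integral (cbox a b) (\<lambda>t. (p (of_real t) / (w - of_real t) + p (of_real t) / (w + of_real t)) / (2 * z * w))"
  proof (simp only: cbox_interval, intro integral_cong)
    fix t assume "t \<in> {a..b}"
    hence "g t *\<^sub>R levy_kernel z t = p (of_real t) / (1 - z * (of_real t)\<^sup>2)"
      by (simp add: levy_kernel_def pg scaleR_conv_of_real mult.commute)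
    thus "g t *\<^sub>R levy_kernel z t
          = (p (of_real t) / (w - of_real t) + p (of_real t) / (w + of_real t)) / (2 * z * w)"
      by (simp only: partial_fractions[OF zw wt])
  qed
  also have "\<dots> = near_transform p a b w / (2 * z * w)"
    by (simp only: integral_divide near_transform_eq_integral[OF p ab w[folded w_def] Imw])
  finally have "2 * z * integral {a..b} (\<lambda>t. g t *\<^sub>R levy_kernel z t)
                = 2 * z * (near_transform p a b w / (2 * z * w))" by simp
  also have "\<dots> = near_transform p a b w / w"
    using z0 by simp
  also have "\<dots> = csqrt z * near_transform p a b w"
    unfolding w_def by (simp only: divide_divide_eq_right div_by_1 mult.commute)
  finally show ?thesis unfolding w_def .
qed

definition levy_local :: "real measure \<Rightarrow> (complex \<Rightarrow> complex) \<Rightarrow> real \<Rightarrow> real \<Rightarrow> complex \<Rightarrow> complex" where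
  "levy_local G p a b z = z * levy_far G a b z + csqrt z * near_transform p a b (1 / csqrt z)"

lemma levy_local_agrees:
  fixes g :: "real \<Rightarrow> real"
  assumes symG: "symmetric_finite_measure G"
    and dens: "\<forall>A\<in>sets borel. emeasure G (A \<inter> {0<..}) =
                 (\<integral>\<^sup>+ x. indicator (A \<inter> {0<..}) x * ennreal (g x) \<partial>lborel)"
    and gpos: "\<And>t. t \<in> {a..b} \<Longrightarrow> 0 \<le> g t"
    and p: "p holomorphic_on D" "open D" "convex D"
    and ab: "complex_of_real ` {a..b} \<subseteq> D" "0 < a" "a \<le> b"
    and pg: "\<And>t. t \<in> {a..b} \<Longrightarrow> p (of_real t) = of_real ((1 + t\<^sup>2) * g t)"
    and sep: "window_separated U a b c" and z: "z \<in> U" "Im z > 0" and w: "1 / csqrt z \<in> D"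
  shows "levy_R G z = levy_local G p a b z"
proof -
  have sG: "sets G = sets borel" and fmG: "finite_measure G"
    using symG by (auto simp: symmetric_finite_measure_def)
  have nz: "1 + t\<^sup>2 \<noteq> 0" for t :: real using zero_le_power2[of t] by linarith
  have "continuous_on {a..b} (\<lambda>t. Re (p (of_real t)) / (1 + t\<^sup>2))"
    by (intro continuous_intros continuous_on_compose2[OF holomorphic_on_imp_continuous_on[OF p(1)]])
       (use ab nz in auto)
  moreover have "Re (p (of_real t)) / (1 + t\<^sup>2) = g t" if "t \<in> {a..b}" for t
    using pg[OF that] nz[of t] by simp
  ultimately have gc: "continuous_on {a..b} g" by (rule continuous_on_eq)
  have "levy_R G z = z * (levy_far G a b z + 2 * integral {a..b} (\<lambda>t. g t *\<^sub>R levy_kernel z t))"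
    unfolding levy_R_kernel
    by (simp only: levy_integral_split[OF symG dens ab(2) gc gpos z(2) levy_far_integrable[OF fmG sG sep z(1)]])
  also have "\<dots> = z * levy_far G a b z + 2 * z * integral {a..b} (\<lambda>t. g t *\<^sub>R levy_kernel z t)"
    by (simp add: algebra_simps)
  also have "\<dots> = levy_local G p a b z"
    by (simp only: levy_window_integral[OF p ab(1,3) pg z(2) w] levy_local_def)
  finally show ?thesis .
qed

lemma levy_local_holomorphic:
  assumes G: "finite_measure G" "sets G = sets borel"
    and p: "p holomorphic_on D" "open D" "convex D"
    and ab: "complex_of_real ` {a..b} \<subseteq> D" "0 \<le> a"
    and V: "V \<subseteq> D" "convex V" "V \<subseteq> {w. a < Re w \<and> Re w < b}"
    and U: "open U" "U \<subseteq> {z. 0 < Re z}" "\<And>z. z \<in> U \<Longrightarrow> 1 / csqrt z \<in> V"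
    and sep: "window_separated U a b c"
  shows "levy_local G p a b holomorphic_on U"
proof -
  have slit: "z \<notin> \<real>\<^sub>\<le>\<^sub>0" "csqrt z \<noteq> 0" if "z \<in> U" for z
    using U(2) that by (auto simp: complex_nonpos_Reals_iff)
  have "(\<lambda>z. 1 / csqrt z) holomorphic_on U"
    by (intro holomorphic_intros) (use slit in auto)
  from holomorphic_on_compose_gen[OF this near_transform_holomorphic[OF p ab V]] U(3)
  have "(\<lambda>z. near_transform p a b (1 / csqrt z)) holomorphic_on U"
    by (auto simp: o_def)
  thus ?thesis
    unfolding levy_local_def
    by (intro holomorphic_intros levy_far_holomorphic[OF G U(1) sep]) (use slit in auto)
qed

lemma levy_local_Im_pos:
  assumes x: "x > 0"
    and p: "p holomorphic_on D" "open D" "convex D"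
    and ab: "complex_of_real ` {a..b} \<subseteq> D" "a < 1 / sqrt x" "1 / sqrt x < b"
    and real: "\<And>t. t \<in> {a..b} \<Longrightarrow> Im (p (of_real t)) = 0"
    and pos: "Re (p (of_real (1 / sqrt x))) > 0"
  shows "Im (levy_local G p a b (of_real x)) > 0"
proof -
  have "csqrt (of_real x) = of_real (sqrt x)" using x by (simp add: csqrt_of_real_nonneg)
  hence w: "1 / csqrt (of_real x) = of_real (1 / sqrt x)" by simp
  have "Im (levy_local G p a b (of_real x))
        = x * Im (levy_far G a b (of_real x)) + sqrt x * Im (near_transform p a b (of_real (1 / sqrt x)))"
    unfolding levy_local_def w \<open>csqrt (of_real x) = of_real (sqrt x)\<close> by simp
  also have "\<dots> = sqrt x * (pi * Re (p (of_real (1 / sqrt x))))"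
    by (simp only: levy_far_real near_transform_real_point[OF p ab real] mult_zero_right add_0)
  also have "\<dots> > 0" using x pos by simp
  finally show ?thesis .
qed

lemma density_holomorphic_extension:
  assumes "real_analytic_on g S" "t0 \<in> S"
  obtains \<rho> p where "\<rho> > 0" "p holomorphic_on ball (complex_of_real t0) \<rho>"
    "\<And>t. \<bar>t - t0\<bar> < \<rho> \<Longrightarrow> p (complex_of_real t) = complex_of_real ((1 + t\<^sup>2) * g t)"
proof -
  obtain \<rho> h where "\<rho> > 0" and h: "h holomorphic_on ball (complex_of_real t0) \<rho>"
    and hg: "\<And>t. \<bar>t - t0\<bar> < \<rho> \<Longrightarrow> h (complex_of_real t) = complex_of_real (g t)"
    using real_analytic_holomorphic_extension[OF assms] by blast
  have "(\<lambda>\<zeta>. (1 + \<zeta>\<^sup>2) * h \<zeta>) holomorphic_on ball (complex_of_real t0) \<rho>"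
    by (intro holomorphic_intros h)
  with \<open>\<rho> > 0\<close> show ?thesis by (rule that) (simp add: hg)
qed

lemma local_window:
  assumes x: "x > 0" and \<rho>: "\<rho> > 0"
  defines "t0 \<equiv> 1 / sqrt x"
  obtains \<delta> r c where "0 < \<delta>" "\<delta> < \<rho>" "\<delta> < t0" "0 < r"
    "window_separated (ball (complex_of_real x) r) (t0 - \<delta>) (t0 + \<delta>) c"
    "ball (complex_of_real x) r \<subseteq> {z. 0 < Re z}"
    "\<And>z. z \<in> ball (complex_of_real x) r \<Longrightarrow> 1 / csqrt z \<in> ball (of_real t0) \<delta>"
proof -
  define \<delta> where "\<delta> = min \<rho> t0 / 2"
  have t0: "t0 > 0" "x * t0\<^sup>2 = 1" using x by (auto simp: t0_def power_divide)
  have \<delta>: "0 < \<delta>" "\<delta> < \<rho>" "\<delta> < t0" using \<rho> t0 by (auto simp: \<delta>_def)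
  have "x * (t0 - \<delta>)\<^sup>2 < x * t0\<^sup>2" "x * t0\<^sup>2 < x * (t0 + \<delta>)\<^sup>2"
    using x \<delta> by (auto intro!: mult_strict_left_mono power_strict_mono)
  then obtain c where sep: "window_separated (ball (complex_of_real x) c) (t0 - \<delta>) (t0 + \<delta>) c"
    using window_separation[OF x, of "t0 - \<delta>" "t0 + \<delta>"] \<delta> t0 by auto
  have "continuous (at (complex_of_real x)) (\<lambda>z. 1 / csqrt z)"
    using x by (intro continuous_intros continuous_at_csqrt) (auto simp: complex_nonpos_Reals_iff)
  moreover have "1 / csqrt (complex_of_real x) = of_real t0"
    using x by (simp add: t0_def csqrt_of_real_nonneg)
  ultimately obtain r1 where r1: "r1 > 0"
    "\<And>z. dist z (complex_of_real x) < r1 \<Longrightarrow> dist (1 / csqrt z) (of_real t0) < \<delta>"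
    using \<delta>(1) unfolding continuous_at_eps_delta by metis
  define r where "r = min r1 (min c x)"
  have c: "c > 0" using sep by (simp add: window_separated_def)
  have r: "0 < r" "ball (complex_of_real x) r \<subseteq> ball (complex_of_real x) c" using r1 c x by (auto simp: r_def)
  show ?thesis
  proof (rule that[OF \<delta> r(1)])
    show "window_separated (ball (complex_of_real x) r) (t0 - \<delta>) (t0 + \<delta>) c"
      using sep r(2) by (auto simp: window_separated_def)
    show "ball (complex_of_real x) r \<subseteq> {z. 0 < Re z}"
    proof
      fix z assume "z \<in> ball (complex_of_real x) r"
      hence "\<bar>Re z - x\<bar> < x"
        using abs_Re_le_cmod[of "z - of_real x"] by (simp add: r_def dist_norm norm_minus_commute)
      thus "z \<in> {z. 0 < Re z}" by simp
    qed
    show "1 / csqrt z \<in> ball (of_real t0) \<delta>" if "z \<in> ball (complex_of_real x) r" for z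
      using r1(2)[of z] that by (simp add: r_def dist_commute)
  qed
qed

lemma real_window_geometry:
  assumes "0 \<le> \<delta>" "\<delta> < \<rho>"
  shows "complex_of_real ` {t0 - \<delta>..t0 + \<delta>} \<subseteq> ball (of_real t0) \<rho>"
    and "ball (complex_of_real t0) \<delta> \<subseteq> {w. t0 - \<delta> < Re w \<and> Re w < t0 + \<delta>}"
proof -
  show "complex_of_real ` {t0 - \<delta>..t0 + \<delta>} \<subseteq> ball (of_real t0) \<rho>"
    using assms by (auto simp: dist_norm simp flip: of_real_diff)
  show "ball (complex_of_real t0) \<delta> \<subseteq> {w. t0 - \<delta> < Re w \<and> Re w < t0 + \<delta>}"
  proof
    fix w assume "w \<in> ball (complex_of_real t0) \<delta>"
    hence "\<bar>Re w - t0\<bar> < \<delta>"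
      using abs_Re_le_cmod[of "w - of_real t0"] by (simp add: dist_norm norm_minus_commute)
    thus "w \<in> {w. t0 - \<delta> < Re w \<and> Re w < t0 + \<delta>}" by auto
  qed
qed

lemma continuation_data:
  assumes ana: "real_analytic_on g {0<..}" and x: "x > 0"
  defines "t0 \<equiv> 1 / sqrt x"
  obtains \<rho> \<delta> r c p where "0 < \<delta>" "\<delta> < \<rho>" "\<delta> < t0" "0 < r"
    "p holomorphic_on ball (complex_of_real t0) \<rho>"
    "\<And>t. t \<in> {t0 - \<delta>..t0 + \<delta>} \<Longrightarrow> p (of_real t) = of_real ((1 + t\<^sup>2) * g t)"
    "window_separated (ball (complex_of_real x) r) (t0 - \<delta>) (t0 + \<delta>) c"
    "ball (complex_of_real x) r \<subseteq> {z. 0 < Re z}"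
    "\<And>z. z \<in> ball (complex_of_real x) r \<Longrightarrow> 1 / csqrt z \<in> ball (complex_of_real t0) \<delta>"
proof -
  obtain \<rho> p where \<rho>: "\<rho> > 0" and p: "p holomorphic_on ball (complex_of_real t0) \<rho>"
    and pg: "\<And>t. \<bar>t - t0\<bar> < \<rho> \<Longrightarrow> p (of_real t) = of_real ((1 + t\<^sup>2) * g t)"
    using density_holomorphic_extension[OF ana, of t0] x by (auto simp: t0_def)
  obtain \<delta> r c where \<delta>: "0 < \<delta>" "\<delta> < \<rho>" "\<delta> < t0" and rest: "0 < r"
    "window_separated (ball (complex_of_real x) r) (t0 - \<delta>) (t0 + \<delta>) c"
    "ball (complex_of_real x) r \<subseteq> {z. 0 < Re z}"
    "\<And>z. z \<in> ball (complex_of_real x) r \<Longrightarrow> 1 / csqrt z \<in> ball (complex_of_real t0) \<delta>"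
    using local_window[OF x \<rho>] unfolding t0_def by blast
  have "p (of_real t) = of_real ((1 + t\<^sup>2) * g t)" if "t \<in> {t0 - \<delta>..t0 + \<delta>}" for t
    using pg[of t] that \<delta> by auto
  from that[OF \<delta> rest(1) p this rest(2-4)] show ?thesis .
qed

lemma levy_continuation_at:
  fixes g :: "real \<Rightarrow> real"
  assumes symG: "symmetric_finite_measure G"
    and dens: "\<forall>A\<in>sets borel. emeasure G (A \<inter> {0<..}) =
                 (\<integral>\<^sup>+ x. indicator (A \<inter> {0<..}) x * ennreal (g x) \<partial>lborel)"
    and gpos: "\<forall>x>0. g x > 0" and ana: "real_analytic_on g {0<..}" and x: "x > 0"
  shows "\<exists>r>0. \<exists>F. F holomorphic_on ball (complex_of_real x) r
           \<and> (\<forall>z\<in>ball (complex_of_real x) r. Im z > 0 \<longrightarrow> F z = levy_R G z)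
           \<and> Im (F (complex_of_real x)) > 0"
proof -
  have sG: "sets G = sets borel" and fmG: "finite_measure G"
    using symG by (auto simp: symmetric_finite_measure_def)
  define t0 where "t0 = 1 / sqrt x"
  show ?thesis
  proof (rule continuation_data[OF ana x, folded t0_def])
    fix \<rho> \<delta> r c p assume \<delta>: "0 < \<delta>" "\<delta> < \<rho>" "\<delta> < t0" and r: "0 < r"
      and p: "p holomorphic_on ball (complex_of_real t0) \<rho>"
      and pg: "\<And>t. t \<in> {t0 - \<delta>..t0 + \<delta>} \<Longrightarrow> p (of_real t) = of_real ((1 + t\<^sup>2) * g t)"
      and sep: "window_separated (ball (complex_of_real x) r) (t0 - \<delta>) (t0 + \<delta>) c"
      and right: "ball (complex_of_real x) r \<subseteq> {z. 0 < Re z}"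
      and W: "\<And>z. z \<in> ball (complex_of_real x) r \<Longrightarrow> 1 / csqrt z \<in> ball (complex_of_real t0) \<delta>"
    note geom = real_window_geometry[OF less_imp_le[OF \<delta>(1)] \<delta>(2), of t0]
    have D: "open (ball (complex_of_real t0) \<rho>)" "convex (ball (complex_of_real t0) \<rho>)"
      and V: "ball (complex_of_real t0) \<delta> \<subseteq> ball (complex_of_real t0) \<rho>" "convex (ball (complex_of_real t0) \<delta>)"
      using \<delta> by (auto simp: subset_ball)
    have gnn: "0 \<le> g t" if "t \<in> {t0 - \<delta>..t0 + \<delta>}" for t
      using gpos[rule_format, of t] that \<delta> by auto
    have real: "Im (p (of_real t)) = 0" if "t \<in> {t0 - \<delta>..t0 + \<delta>}" for t
      using pg[OF that] by simp
    have pos: "Re (p (of_real t0)) > 0"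
      using pg[of t0] gpos \<delta> by (simp add: add_pos_nonneg)
    have t0x: "1 / sqrt x = t0" by (simp add: t0_def)
    let ?F = "levy_local G p (t0 - \<delta>) (t0 + \<delta>)"
    have "?F holomorphic_on ball (complex_of_real x) r"
      by (rule levy_local_holomorphic[OF fmG sG p D geom(1) _ V geom(2) _ right W sep]) (use \<delta> in auto)
    moreover have "?F z = levy_R G z" if "z \<in> ball (complex_of_real x) r" "Im z > 0" for z
      by (rule sym, rule levy_local_agrees[OF symG dens gnn p D geom(1) _ _ pg sep that subsetD[OF V(1) W[OF that(1)]]])
         (use \<delta> in auto)
    moreover have "Im (?F (complex_of_real x)) > 0"
      by (rule levy_local_Im_pos[OF x p D geom(1), unfolded t0x, OF _ _ real pos]) (use \<delta> in auto)
    ultimately show ?thesis using r by blast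
  qed
qed

theorem mainTheorem17:
  fixes lam :: real and G :: "real measure" and C :: "complex \<Rightarrow> complex"
  assumes lam: "0 < lam" "lam < 1"
    and symG: "symmetric_finite_measure G"
    and nonzero: "emeasure G UNIV \<noteq> 0"
    and dens: "\<exists>g. (\<forall>A\<in>sets borel. emeasure G (A \<inter> {0<..}) =
                        (\<integral>\<^sup>+ x. indicator (A \<inter> {0<..}) x * ennreal (g x) \<partial>lborel))
                 \<and> (\<forall>x>0. g x > 0) \<and> real_analytic_on g {0<..}"
    and C_levy: "\<forall>z\<in>slit_plane. C z = levy_R G z"
  shows "\<forall>x::real. x > 0 \<longrightarrow>
           (\<exists>r>0. \<exists>F. F holomorphic_on ball (complex_of_real x) r
                  \<and> (\<forall>z\<in>ball (complex_of_real x) r. Im z > 0 \<longrightarrow> F z = C z)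
                  \<and> Im (F (complex_of_real x)) > 0)"
proof (intro allI impI)
  fix x :: real assume x: "x > 0"
  obtain g where g: "\<forall>A\<in>sets borel. emeasure G (A \<inter> {0<..}) =
                   (\<integral>\<^sup>+ x. indicator (A \<inter> {0<..}) x * ennreal (g x) \<partial>lborel)"
    "\<forall>x>0. g x > 0" "real_analytic_on g {0<..}" using dens by blast
  from levy_continuation_at[OF symG g x] obtain r F where r: "r > 0"
    and F: "F holomorphic_on ball (complex_of_real x) r"
    and agree: "\<forall>z\<in>ball (complex_of_real x) r. Im z > 0 \<longrightarrow> F z = levy_R G z"
    and pos: "Im (F (complex_of_real x)) > 0" by blast
  have "\<forall>z\<in>ball (complex_of_real x) r. Im z > 0 \<longrightarrow> F z = C z"
    using agree C_levy by (auto simp: slit_plane_def)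
  with r F pos show "\<exists>r>0. \<exists>F. F holomorphic_on ball (complex_of_real x) r
                  \<and> (\<forall>z\<in>ball (complex_of_real x) r. Im z > 0 \<longrightarrow> F z = C z)
                  \<and> Im (F (complex_of_real x)) > 0" by blast
qed

end
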